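(* Let $(X,\wedge,\vee,\bot,\top)$ be a bounded distributive lattice, let $n\ge 1$, and let $x=(x_1,\ldots,x_n)$ be a sequence of elements of $X$. For $0\le m\le n$ and $0\le k\le m+1$ define $$P_m(k)=\begin{cases}\bot & k=0,\\ \bigwedge_{I\subseteq\{1,\ldots,m\},\ |I|=k}\ \bigvee_{i\in I} x_i & 1\le k\le m,\\ \top & k=m+1.\end{cases}$$ Then for every $k$ with $1\le k\le n$, $$P_n(k)=P_{n-1}(k)\wedge\bigl(P_{n-1}(k-1)\vee x_n\bigr).$$
   Context: For $1\le k\le m$, $P_m(k)$ is the $k$-th element of the sequence $(x_1,\ldots,x_m)$ "sorted with respect to the lattice", i.e. the meet, over all $k$-element subsets $I$ of $\{1,\ldots,m\}$, of the join of the $x_i$ with $i\in I$. Here $\bot$ is the least and $\top$ the greatest element of $X$. *)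

theory Defs
  imports Main
begin

text \<open>P x m k: the k-th element of (x_1,...,x_m) sorted w.r.t. the lattice.\<close>
definition P :: "(nat \<Rightarrow> 'a::{bounded_lattice, distrib_lattice}) \<Rightarrow> nat \<Rightarrow> nat \<Rightarrow> 'a" where
  "P x m k = (if k = 0 then bot
              else if k \<le> m then
                Inf_fin ((\<lambda>I. Sup_fin (x ` I)) ` {I. I \<subseteq> {1..m} \<and> card I = k})
              else top)"

end

theory Submission
  imports Defs
begin

text \<open>The \<open>k\<close>-subsets of \<open>{1..n}\<close> are the \<open>k\<close>-subsets of \<open>{1..n-1}\<close>, whose meet of joins
  is \<open>P x (n - 1) k\<close> (the empty meet \<open>\<top>\<close> when \<open>k = n\<close>), together with the sets \<open>insert n J\<close>
  for the \<open>(k-1)\<close>-subsets \<open>J\<close> of \<open>{1..n-1}\<close>. The join over \<open>insert n J\<close> is \<open>x n \<squnion> \<Squnion>J\<close>,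
  and distributivity pulls \<open>x n\<close> out of the meet, leaving \<open>P x (n - 1) (k - 1) \<squnion> x n\<close>; for
  \<open>k = 1\<close> the only such set is \<open>{n}\<close>, matching \<open>P x (n - 1) 0 = \<bottom>\<close>.\<close>

definition meet_of_joins :: "('b \<Rightarrow> 'a::lattice) \<Rightarrow> 'b set set \<Rightarrow> 'a" where
  "meet_of_joins x F = Inf_fin ((\<lambda>I. Sup_fin (x ` I)) ` F)"

lemma P_eq_meet_of_joins:
  assumes "1 \<le> k" and "k \<le> m"
  shows "P x m k = meet_of_joins x {I. I \<subseteq> {1..m} \<and> card I = k}"
  using assms by (simp add: P_def meet_of_joins_def)

lemma subsets_card_insert:
  assumes "finite A" and "a \<notin> A"
  shows "{I. I \<subseteq> insert a A \<and> card I = Suc k}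
    = {I. I \<subseteq> A \<and> card I = Suc k} \<union> insert a ` {I. I \<subseteq> A \<and> card I = k}"
proof (intro set_eqI iffI)
  fix I
  assume "I \<in> {I. I \<subseteq> insert a A \<and> card I = Suc k}"
  then have I: "I \<subseteq> insert a A" "card I = Suc k" by simp_all
  show "I \<in> {I. I \<subseteq> A \<and> card I = Suc k} \<union> insert a ` {I. I \<subseteq> A \<and> card I = k}"
  proof (cases "a \<in> I")
    case True
    have "finite I"
      using I(1) assms(1) by (simp add: finite_subset)
    then have "I - {a} \<in> {I. I \<subseteq> A \<and> card I = k}"
      using I True by auto
    moreover have "I = insert a (I - {a})"
      using True by blast
    ultimately show ?thesis by blast
  next
    case False
    then show ?thesis using I by blast
  qed
next
  fix I
  assume "I \<in> {I. I \<subseteq> A \<and> card I = Suc k} \<union> insert a ` {I. I \<subseteq> A \<and> card I = k}"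
  then consider "I \<subseteq> A" "card I = Suc k" | J where "I = insert a J" "J \<subseteq> A" "card J = k"
    by blast
  then show "I \<in> {I. I \<subseteq> insert a A \<and> card I = Suc k}"
  proof cases
    case (2 J)
    have "finite J" "a \<notin> J"
      using 2 assms by (auto intro: finite_subset)
    then show ?thesis using 2 by auto
  qed auto
qed

lemma finite_subsets_card: "finite A \<Longrightarrow> finite {I. I \<subseteq> A \<and> card I = k}"
  by (rule finite_subset[OF _ finite_Collect_subsets]) auto

lemma subsets_card_nonempty:
  assumes "k \<le> card A"
  shows "{I. I \<subseteq> A \<and> card I = k} \<noteq> {}"
  using obtain_subset_with_card_n[OF assms] by blast

lemma subsets_card_empty:
  assumes "finite A" and "card A < k"
  shows "{I. I \<subseteq> A \<and> card I = k} = {}"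
  using assms by (auto dest: card_mono[OF assms(1)])

lemma meet_of_joins_Un:
  assumes "finite F" "F \<noteq> {}" "finite G" "G \<noteq> {}"
  shows "meet_of_joins x (F \<union> G) = inf (meet_of_joins x F) (meet_of_joins x G)"
  using assms by (simp add: meet_of_joins_def image_Un Inf_fin.union)

lemma meet_of_joins_insert:
  fixes x :: "'b \<Rightarrow> 'a::distrib_lattice"
  assumes "finite F" "F \<noteq> {}" and "\<And>J. J \<in> F \<Longrightarrow> finite J \<and> J \<noteq> {}"
  shows "meet_of_joins x (insert a ` F) = sup (x a) (meet_of_joins x F)"
proof -
  have "(\<lambda>I. Sup_fin (x ` I)) ` insert a ` F = sup (x a) ` (\<lambda>I. Sup_fin (x ` I)) ` F"
    unfolding image_image using assms(3) by (intro image_cong) simp_all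
  moreover have "sup (x a) (Inf_fin B) = Inf_fin (sup (x a) ` B)" if "finite B" "B \<noteq> {}" for B
    using that by (intro Inf_fin.hom_commute) (simp_all add: sup_inf_distrib1)
  ultimately show ?thesis
    using assms(1,2) by (simp add: meet_of_joins_def)
qed

lemma meet_of_joins_insert_Suc:
  assumes "1 \<le> k" and "k \<le> Suc m"
  shows "meet_of_joins x (insert (Suc m) ` {I. I \<subseteq> {1..m} \<and> card I = k - 1})
    = sup (P x m (k - 1)) (x (Suc m))"
proof (cases "k = 1")
  case True
  then have "{I. I \<subseteq> {1..m} \<and> card I = k - 1} = {{}}"
    by (auto dest: finite_subset[OF _ finite_atLeastAtMost])
  then show ?thesis
    using True by (simp add: meet_of_joins_def P_def)
next
  case False
  let ?F = "{I. I \<subseteq> {1..m} \<and> card I = k - 1}"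
  have "finite ?F"
    by (simp add: finite_subsets_card)
  moreover have "?F \<noteq> {}"
    using assms(2) by (intro subsets_card_nonempty) simp
  moreover have "finite J \<and> J \<noteq> {}" if "J \<in> ?F" for J
    using that False assms(1) by (auto intro: finite_subset)
  ultimately have "meet_of_joins x (insert (Suc m) ` ?F) = sup (x (Suc m)) (meet_of_joins x ?F)"
    by (rule meet_of_joins_insert)
  also have "meet_of_joins x ?F = P x m (k - 1)"
    using False assms by (simp add: P_eq_meet_of_joins)
  finally show ?thesis
    by (simp only: sup.commute)
qed

lemma P_Suc_eq_meet_of_joins_Un:
  assumes "1 \<le> k" and "k \<le> Suc m"
  shows "P x (Suc m) k = meet_of_joins x
    ({I. I \<subseteq> {1..m} \<and> card I = k} \<union> insert (Suc m) ` {I. I \<subseteq> {1..m} \<and> card I = k - 1})"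
proof -
  have "P x (Suc m) k = meet_of_joins x {I. I \<subseteq> {1..Suc m} \<and> card I = k}"
    using assms by (rule P_eq_meet_of_joins)
  also have "{I. I \<subseteq> {1..Suc m} \<and> card I = k}
      = {I. I \<subseteq> {1..m} \<and> card I = k} \<union> insert (Suc m) ` {I. I \<subseteq> {1..m} \<and> card I = k - 1}"
    using subsets_card_insert[of "{1..m}" "Suc m" "k - 1"] assms(1)
    by (simp add: atLeastAtMostSuc_conv)
  finally show ?thesis .
qed

lemma P_Suc:
  assumes "1 \<le> k" and "k \<le> Suc m"
  shows "P x (Suc m) k = inf (P x m k) (sup (P x m (k - 1)) (x (Suc m)))"
proof -
  define F where "F j = {I. I \<subseteq> {1..m} \<and> card I = j}" for j
  have split: "P x (Suc m) k = meet_of_joins x (F k \<union> insert (Suc m) ` F (k - 1))"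
    unfolding F_def using assms by (rule P_Suc_eq_meet_of_joins_Un)
  have insert_part: "meet_of_joins x (insert (Suc m) ` F (k - 1)) = sup (P x m (k - 1)) (x (Suc m))"
    unfolding F_def using assms by (rule meet_of_joins_insert_Suc)
  show ?thesis
  proof (cases "k \<le> m")
    case True
    have "finite (F j)" for j
      unfolding F_def by (simp add: finite_subsets_card)
    moreover have "F j \<noteq> {}" if "j \<le> m" for j
      unfolding F_def using that by (intro subsets_card_nonempty) simp
    ultimately have "P x (Suc m) k
        = inf (meet_of_joins x (F k)) (meet_of_joins x (insert (Suc m) ` F (k - 1)))"
      unfolding split using True by (intro meet_of_joins_Un) simp_all
    also have "meet_of_joins x (F k) = P x m k"
      unfolding F_def by (rule P_eq_meet_of_joins[symmetric]) (use True assms(1) in simp_all)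
    finally show ?thesis
      unfolding insert_part .
  next
    case False
    then have "F k = {}"
      unfolding F_def by (intro subsets_card_empty) simp_all
    moreover have "P x m k = top"
      using False by (simp add: P_def)
    ultimately show ?thesis
      unfolding split by (simp only: Un_empty_left insert_part inf_top_left)
  qed
qed

theorem proposition3p1:
  fixes x :: "nat \<Rightarrow> 'a::{bounded_lattice, distrib_lattice}"
    and n k :: nat
  assumes "1 \<le> n" and "1 \<le> k" and "k \<le> n"
  shows "P x n k = inf (P x (n - 1) k) (sup (P x (n - 1) (k - 1)) (x n))"
proof -
  obtain m where n: "n = Suc m"
    using assms(1) by (cases n) simp_all
  with assms(3) have "k \<le> Suc m"
    by simp
  then show ?thesis
    unfolding n diff_Suc_1 by (rule P_Suc[OF assms(2)])
qed

end
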